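(* Let $\mathbf{n}^\xi_{1:H}$ be a sequence of count tables generated by the joint state-action trajectory of $M$ agents over horizon $H$ (as described in the context), and define for $t=1,\dots,H$ $$R^\xi_t=\sum_{T=t}^H\sum_{i\in S,j\in A}n^\xi_T(i,j)\,r_T\big(i,j,\mathbf{n}^\xi_T\big).$$ Let $V^\xi_t(i,j)$ be the individual value function defined in the context. Then for every $t$, $$R^\xi_t=\sum_{i\in S,j\in A}n^\xi_t(i,j)\,V^\xi_t(i,j).$$
   Context: There are $M$ agents, a finite local state space $S$, finite action set $A$, horizon $H$. A joint trajectory assigns each agent $m$ states $s^m_1,\dots,s^m_H\in S$ and actions $a^m_1,\dots,a^m_H\in A$. Its counts are $n^\xi_t(i)=|\{m:s^m_t=i\}|$, $n^\xi_t(i,j)=|\{m:(s^m_t,a^m_t)=(i,j)\}|$, $n^\xi_t(i,j,i')=|\{m:(s^m_t,a^m_t,s^m_{t+1})=(i,j,i')\}|$ for $t<H$, and $\mathbf{n}^\xi_t=(n^\xi_t(i))_{i\in S}$. $r_t(i,j,\mathbf{n})$ is a given real-valued local reward function. The individual value function is defined, for pairs $(i,j)$ with $n^\xi_t(i,j)>0$, by backward recursion: $V^\xi_H(i,j)=r_H(i,j,\mathbf{n}^\xi_H)$ and, for $t<H$, $$V^\xi_t(i,j)=r_t(i,j,\mathbf{n}^\xi_t)+\sum_{i'\in S,j'\in A}\frac{n^\xi_t(i,j,i')}{n^\xi_t(i,j)}\cdot\frac{n^\xi_{t+1}(i',j')}{n^\xi_{t+1}(i')}\,V^\xi_{t+1}(i',j'),$$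 where terms with zero count numerator are taken to be $0$; likewise $n^\xi_t(i,j)V^\xi_t(i,j)$ is taken to be $0$ when $n^\xi_t(i,j)=0$. *)

theory Defs
  imports Complex_Main
begin

(* Agents are 0..M-1; local states of type 's, actions of type 'a (finite types).
   st m t / ac m t : state / action of agent m at time t (times 1..H are relevant). *)

definition cnt1 :: "nat \<Rightarrow> (nat \<Rightarrow> nat \<Rightarrow> 's) \<Rightarrow> nat \<Rightarrow> 's \<Rightarrow> nat" where
  "cnt1 M st t i = card {m \<in> {..<M}. st m t = i}"

definition cnt2 :: "nat \<Rightarrow> (nat \<Rightarrow> nat \<Rightarrow> 's) \<Rightarrow> (nat \<Rightarrow> nat \<Rightarrow> 'a) \<Rightarrow> nat \<Rightarrow> 's \<Rightarrow> 'a \<Rightarrow> nat" where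
  "cnt2 M st ac t i j = card {m \<in> {..<M}. st m t = i \<and> ac m t = j}"

definition cnt3 :: "nat \<Rightarrow> (nat \<Rightarrow> nat \<Rightarrow> 's) \<Rightarrow> (nat \<Rightarrow> nat \<Rightarrow> 'a) \<Rightarrow> nat \<Rightarrow> 's \<Rightarrow> 'a \<Rightarrow> 's \<Rightarrow> nat" where
  "cnt3 M st ac t i j i' = card {m \<in> {..<M}. st m t = i \<and> ac m t = j \<and> st m (Suc t) = i'}"

(* Individual value function, computed backwards: Vaux k is V at time H - k. *)
primrec Vaux :: "nat \<Rightarrow> nat \<Rightarrow> (nat \<Rightarrow> nat \<Rightarrow> 's::finite) \<Rightarrow> (nat \<Rightarrow> nat \<Rightarrow> 'a::finite)
     \<Rightarrow> (nat \<Rightarrow> 's \<Rightarrow> 'a \<Rightarrow> ('s \<Rightarrow> nat) \<Rightarrow> real) \<Rightarrow> nat \<Rightarrow> 's \<Rightarrow> 'a \<Rightarrow> real" where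
  "Vaux M H st ac r 0 i j = r H i j (cnt1 M st H)"
| "Vaux M H st ac r (Suc k) i j =
     (let t = H - Suc k in
      r t i j (cnt1 M st t) +
      (\<Sum>i'\<in>UNIV. \<Sum>j'\<in>UNIV.
         (if cnt3 M st ac t i j i' = 0 \<or> cnt2 M st ac (Suc t) i' j' = 0 then 0
          else (real (cnt3 M st ac t i j i') / real (cnt2 M st ac t i j)) *
               (real (cnt2 M st ac (Suc t) i' j') / real (cnt1 M st (Suc t) i')) *
               Vaux M H st ac r k i' j')))"

definition Vval :: "nat \<Rightarrow> nat \<Rightarrow> (nat \<Rightarrow> nat \<Rightarrow> 's::finite) \<Rightarrow> (nat \<Rightarrow> nat \<Rightarrow> 'a::finite)
     \<Rightarrow> (nat \<Rightarrow> 's \<Rightarrow> 'a \<Rightarrow> ('s \<Rightarrow> nat) \<Rightarrow> real) \<Rightarrow> nat \<Rightarrow> 's \<Rightarrow> 'a \<Rightarrow> real" where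
  "Vval M H st ac r t i j = Vaux M H st ac r (H - t) i j"

definition Rret :: "nat \<Rightarrow> nat \<Rightarrow> (nat \<Rightarrow> nat \<Rightarrow> 's::finite) \<Rightarrow> (nat \<Rightarrow> nat \<Rightarrow> 'a::finite)
     \<Rightarrow> (nat \<Rightarrow> 's \<Rightarrow> 'a \<Rightarrow> ('s \<Rightarrow> nat) \<Rightarrow> real) \<Rightarrow> nat \<Rightarrow> real" where
  "Rret M H st ac r t = (\<Sum>T\<in>{t..H}. \<Sum>i\<in>UNIV. \<Sum>j\<in>UNIV.
       real (cnt2 M st ac T i j) * r T i j (cnt1 M st T))"

end

theory Submission
  imports Defs
begin

(* Weighting by counts turns a sum over state-action pairs into a sum over agents. Hence the
   count-weighted value at time t is the count-weighted reward at t plus the sum over agents m of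
   w (s^m_{t+1}), where w i' is the average of V_{t+1} (i', -) weighted by the empirical action
   frequencies at i'. Regrouping that sum by the state at t+1 gives the count-weighted value at
   t+1, and backward induction on t from H yields the theorem. *)

lemma sum_card_fiber_mult:
  fixes g :: "'x \<Rightarrow> 'b::finite" and f :: "'b \<Rightarrow> 'c::comm_semiring_1"
  assumes "finite A"
  shows "(\<Sum>y\<in>UNIV. of_nat (card {x \<in> A. g x = y}) * f y) = (\<Sum>x\<in>A. f (g x))"
proof -
  have "(\<Sum>y\<in>UNIV. of_nat (card {x \<in> A. g x = y}) * f y)
      = (\<Sum>y\<in>UNIV. \<Sum>x \<in> {x \<in> A. g x = y}. f (g x))"
    by (intro sum.cong refl) simp
  also have "\<dots> = (\<Sum>x\<in>A. f (g x))"
    using assms by (intro sum.group) auto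
  finally show ?thesis .
qed

lemma sum_cnt1_mult:
  fixes st :: "nat \<Rightarrow> nat \<Rightarrow> 's::finite"
  shows "(\<Sum>i\<in>UNIV. real (cnt1 M st t i) * f i) = (\<Sum>m<M. f (st m t))"
  unfolding cnt1_def using sum_card_fiber_mult[of "{..<M}" "\<lambda>m. st m t" f] by simp

lemma sum_cnt3_mult:
  fixes st :: "nat \<Rightarrow> nat \<Rightarrow> 's::finite" and ac :: "nat \<Rightarrow> nat \<Rightarrow> 'a::finite"
  shows "(\<Sum>i\<in>UNIV. \<Sum>j\<in>UNIV. \<Sum>i'\<in>UNIV. real (cnt3 M st ac t i j i') * f i j i')
       = (\<Sum>m<M. f (st m t) (ac m t) (st m (Suc t)))"
  using sum_card_fiber_mult[of "{..<M}" "\<lambda>m. (st m t, ac m t, st m (Suc t))" "\<lambda>(i, j, i'). f i j i'"]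
  by (simp add: cnt3_def sum.cartesian_product split_def prod_eq_iff)

lemma real_mult_div_of_le:
  fixes a b :: nat
  assumes "a \<le> b"
  shows "real b * (real a / real b) = real a"
  using assms by (cases "b = 0") auto

lemma cnt3_le_cnt2: "cnt3 M st ac t i j i' \<le> cnt2 M st ac t i j"
  unfolding cnt3_def cnt2_def by (rule card_mono) auto

lemma cnt2_le_cnt1: "cnt2 M st ac t i j \<le> cnt1 M st t i"
  unfolding cnt2_def cnt1_def by (rule card_mono) auto

lemma Vval_last: "Vval M H st ac r H i j = r H i j (cnt1 M st H)"
  by (simp add: Vval_def)

(* The case distinction in Vaux can be dropped: the term it guards vanishes anyway, since x / 0 = 0. *)
lemma Vval_step:
  assumes "t < H"
  shows "Vval M H st ac r t i j = r t i j (cnt1 M st t) +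
    (\<Sum>i'\<in>UNIV. \<Sum>j'\<in>UNIV. real (cnt3 M st ac t i j i') / real (cnt2 M st ac t i j) *
       (real (cnt2 M st ac (Suc t) i' j') / real (cnt1 M st (Suc t) i') * Vval M H st ac r (Suc t) i' j'))"
proof -
  have "H - t = Suc (H - Suc t)" "H - Suc (H - Suc t) = t"
    using assms by auto
  then show ?thesis
    unfolding Vval_def by (auto simp: Let_def intro!: sum.cong)
qed

lemma sum_cnt2_Vval_step:
  fixes st :: "nat \<Rightarrow> nat \<Rightarrow> 's::finite" and ac :: "nat \<Rightarrow> nat \<Rightarrow> 'a::finite"
  assumes "t < H"
  shows "(\<Sum>i\<in>UNIV. \<Sum>j\<in>UNIV. real (cnt2 M st ac t i j) * Vval M H st ac r t i j)
    = (\<Sum>i\<in>UNIV. \<Sum>j\<in>UNIV. real (cnt2 M st ac t i j) * r t i j (cnt1 M st t))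
    + (\<Sum>i\<in>UNIV. \<Sum>j\<in>UNIV. real (cnt2 M st ac (Suc t) i j) * Vval M H st ac r (Suc t) i j)"
proof -
  define w where "w i' = (\<Sum>j'\<in>UNIV. real (cnt2 M st ac (Suc t) i' j') / real (cnt1 M st (Suc t) i')
    * Vval M H st ac r (Suc t) i' j')" for i'
  have weighted_Vval: "real (cnt2 M st ac t i j) * Vval M H st ac r t i j
    = real (cnt2 M st ac t i j) * r t i j (cnt1 M st t) + (\<Sum>i'\<in>UNIV. real (cnt3 M st ac t i j i') * w i')"
    for i j
  proof -
    have "Vval M H st ac r t i j = r t i j (cnt1 M st t)
      + (\<Sum>i'\<in>UNIV. real (cnt3 M st ac t i j i') / real (cnt2 M st ac t i j) * w i')"
      unfolding Vval_step[OF assms] w_def by (simp add: sum_distrib_left)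
    then have "real (cnt2 M st ac t i j) * Vval M H st ac r t i j
      = real (cnt2 M st ac t i j) * r t i j (cnt1 M st t)
      + (\<Sum>i'\<in>UNIV. real (cnt2 M st ac t i j) * (real (cnt3 M st ac t i j i') / real (cnt2 M st ac t i j)) * w i')"
      by (simp only: distrib_left sum_distrib_left mult.assoc)
    then show ?thesis
      by (simp only: real_mult_div_of_le[OF cnt3_le_cnt2])
  qed
  have "(\<Sum>i\<in>UNIV. \<Sum>j\<in>UNIV. \<Sum>i'\<in>UNIV. real (cnt3 M st ac t i j i') * w i')
    = (\<Sum>m<M. w (st m (Suc t)))"
    by (rule sum_cnt3_mult)
  also have "\<dots> = (\<Sum>i'\<in>UNIV. real (cnt1 M st (Suc t) i') * w i')"
    by (rule sum_cnt1_mult[symmetric])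
  also have "\<dots> = (\<Sum>i\<in>UNIV. \<Sum>j\<in>UNIV. real (cnt2 M st ac (Suc t) i j) * Vval M H st ac r (Suc t) i j)"
    unfolding w_def sum_distrib_left
    by (simp only: mult.assoc[symmetric] real_mult_div_of_le[OF cnt2_le_cnt1])
  finally show ?thesis
    by (simp add: weighted_Vval sum.distrib)
qed

lemma Rret_step:
  assumes "t \<le> H"
  shows "Rret M H st ac r t
    = (\<Sum>i\<in>UNIV. \<Sum>j\<in>UNIV. real (cnt2 M st ac t i j) * r t i j (cnt1 M st t)) + Rret M H st ac r (Suc t)"
proof -
  have "{t..H} = insert t {Suc t..H}"
    using assms by auto
  then show ?thesis
    unfolding Rret_def by simp
qed

theorem lemma1:
  fixes M H :: nat
    and st :: "nat \<Rightarrow> nat \<Rightarrow> 's::finite"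
    and ac :: "nat \<Rightarrow> nat \<Rightarrow> 'a::finite"
    and r :: "nat \<Rightarrow> 's \<Rightarrow> 'a \<Rightarrow> ('s \<Rightarrow> nat) \<Rightarrow> real"
    and t :: nat
  assumes "1 \<le> t" and "t \<le> H"
  shows "Rret M H st ac r t =
         (\<Sum>i\<in>UNIV. \<Sum>j\<in>UNIV. real (cnt2 M st ac t i j) * Vval M H st ac r t i j)"
  using assms(2) \<comment> \<open>\<open>1 \<le> t\<close> only reflects the paper's indexing; the identity also holds at t = 0\<close>
proof (induction t rule: inc_induct)
  case base
  show ?case
    using Rret_step[of H H M st ac r] by (simp add: Rret_def Vval_last)
next
  case (step t)
  then show ?case
    using Rret_step[of t H M st ac r] sum_cnt2_Vval_step[of t H M st ac r] by simp
qed

end
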